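(* Let $G$ be a graph whose odd girth is $5$. If $E(G)=E_1\cup E_2$ with $E_1\cap E_2=\emptyset$, where $(V(G),E_1)$ is bipartite and $E_2$ is a matching, then $G$ admits an orientation in which every $5$-cycle of $G$ is alternating.
   Context: The odd girth of a graph is the length of its shortest odd cycle. An orientation assigns each edge exactly one direction. In an oriented graph, a subgraph that is a cycle is called alternating if at most one of its vertices has both positive in-degree and positive out-degree within that cycle (all others are sources or sinks of the cycle). *)

theory Defs
  imports Main
begin

definition simple_graph :: "'a set \<Rightarrow> 'a set set \<Rightarrow> bool" where
  "simple_graph V E \<longleftrightarrow> finite V \<and>
     (\<forall>e\<in>E. \<exists>u v. u \<noteq> v \<and> u \<in> V \<and> v \<in> V \<and> e = {u, v})"

definition is_cycle :: "'a set \<Rightarrow> 'a set set \<Rightarrow> 'a list \<Rightarrow> bool" where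
  "is_cycle V E c \<longleftrightarrow> length c \<ge> 3 \<and> distinct c \<and> set c \<subseteq> V \<and>
     (\<forall>i < length c. {c ! i, c ! (Suc i mod length c)} \<in> E)"

definition cycle_edges :: "'a list \<Rightarrow> 'a set set" where
  "cycle_edges c = {{c ! i, c ! (Suc i mod length c)} | i. i < length c}"

definition has_odd_girth :: "'a set \<Rightarrow> 'a set set \<Rightarrow> nat \<Rightarrow> bool" where
  "has_odd_girth V E k \<longleftrightarrow> odd k \<and> (\<exists>c. is_cycle V E c \<and> length c = k) \<and>
     (\<forall>c. is_cycle V E c \<and> odd (length c) \<longrightarrow> k \<le> length c)"

definition bipartite :: "'a set \<Rightarrow> 'a set set \<Rightarrow> bool" where
  "bipartite V E \<longleftrightarrow> (\<exists>A \<subseteq> V. \<forall>e\<in>E. \<exists>u v. e = {u, v} \<and> u \<in> A \<and> v \<in> V - A)"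

definition matching :: "'a set set \<Rightarrow> bool" where
  "matching M \<longleftrightarrow> (\<forall>e\<in>M. \<forall>f\<in>M. e \<noteq> f \<longrightarrow> e \<inter> f = {})"

definition orientation :: "'a set set \<Rightarrow> ('a \<times> 'a) set \<Rightarrow> bool" where
  "orientation E D \<longleftrightarrow> (\<forall>(u, v)\<in>D. {u, v} \<in> E) \<and>
     (\<forall>u v. u \<noteq> v \<and> {u, v} \<in> E \<longrightarrow> ((u, v) \<in> D \<longleftrightarrow> (v, u) \<notin> D))"

definition alternating :: "('a \<times> 'a) set \<Rightarrow> 'a list \<Rightarrow> bool" where
  "alternating D c \<longleftrightarrow>
     card {v \<in> set c. (\<exists>w. {w, v} \<in> cycle_edges c \<and> (w, v) \<in> D) \<and>
                       (\<exists>w. {v, w} \<in> cycle_edges c \<and> (v, w) \<in> D)} \<le> 1"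

end

theory Submission
  imports Defs "HOL-Library.Product_Lexorder"
begin

text \<open>Rank the vertices so that one side A of a bipartition of E1 precedes its complement,
  and orient every edge towards the higher rank. A vertex of a cycle then has both an incoming
  and an outgoing cycle arc exactly when its rank lies between those of its two cycle
  neighbours. An edge with both ends on the same side is not in E1, hence lies in the matching
  E2, so no two consecutive edges of a cycle are monochromatic. Being odd, a 5-cycle has a
  monochromatic edge {a, b}; each of its other three vertices has both cycle neighbours on the
  opposite side, so its rank is extremal, and comparing ranks shows that a and b cannot both
  be in between.\<close>

lemma list_of_length_5:
  assumes "length xs = 5"
  obtains a b c d e where "xs = [a, b, c, d, e]"
  using assms by (simp add: numeral_eq_Suc length_Suc_conv) blast

lemma cycle_edges_conv_image:
  "cycle_edges c = (\<lambda>i. {c ! i, c ! (Suc i mod length c)}) ` {..<length c}"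
  unfolding cycle_edges_def by blast

lemma cycle_edges_5: "cycle_edges [a, b, c, d, e] = {{a, b}, {b, c}, {c, d}, {d, e}, {e, a}}"
proof -
  have "{..<length [a, b, c, d, e]} = {0, 1, 2, 3, 4}" by auto
  then show ?thesis by (simp add: cycle_edges_conv_image)
qed

lemma cycle_edges_subset: "is_cycle V E c \<Longrightarrow> cycle_edges c \<subseteq> E"
  unfolding is_cycle_def cycle_edges_def by blast

lemma Suc_mod_image_lessThan: "(\<lambda>i. Suc i mod n) ` {..<n} = {..<n}"
proof (cases n)
  case (Suc m)
  have "j \<in> (\<lambda>i. Suc i mod n) ` {..<n}" if "j < n" for j
  proof (cases j)
    case 0
    then show ?thesis using Suc by (intro image_eqI[of _ _ m]) auto
  next
    case (Suc k)
    then show ?thesis using that by (intro image_eqI[of _ _ k]) auto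
  qed
  then show ?thesis by auto
qed simp

lemma cycle_edges_rotate1: "cycle_edges (rotate1 c) = cycle_edges c"
proof -
  let ?n = "length c" and ?edge = "\<lambda>i. {c ! i, c ! (Suc i mod length c)}"
  have "cycle_edges (rotate1 c) = ?edge ` (\<lambda>i. Suc i mod ?n) ` {..<?n}"
    unfolding cycle_edges_conv_image image_image length_rotate1
  proof (rule image_cong[OF refl])
    fix i assume "i \<in> {..<?n}"
    then have "i < ?n" by simp
    moreover from this have "Suc i mod ?n < ?n" by (intro mod_less_divisor) linarith
    ultimately show "{rotate1 c ! i, rotate1 c ! (Suc i mod ?n)} = ?edge (Suc i mod ?n)"
      by (simp add: nth_rotate1 mod_Suc_eq)
  qed
  then show ?thesis by (simp only: Suc_mod_image_lessThan cycle_edges_conv_image)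
qed

lemma cycle_edges_rotate: "cycle_edges (rotate k c) = cycle_edges c"
  by (induction k) (simp_all add: cycle_edges_rotate1)

lemma alternating_rotate: "alternating D (rotate k c) \<longleftrightarrow> alternating D c"
  by (simp add: alternating_def cycle_edges_rotate)

lemma odd_cycle_monochromatic_edge:
  assumes "odd (length c)"
  obtains i where "i < length c" and "P (c ! i) \<longleftrightarrow> P (c ! (Suc i mod length c))"
proof -
  let ?n = "length c"
  have "\<exists>i < ?n. P (c ! i) \<longleftrightarrow> P (c ! (Suc i mod ?n))"
  proof (rule ccontr)
    assume "\<not> ?thesis"
    then have flip: "P (c ! (Suc i mod ?n)) \<longleftrightarrow> \<not> P (c ! i)" if "i < ?n" for i
      using that by blast
    have parity: "P (c ! i) \<longleftrightarrow> (P (c ! 0) \<longleftrightarrow> even i)" if "i < ?n" for i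
      using that
    proof (induction i)
      case (Suc i)
      then show ?case using flip[of i] by simp
    qed simp
    have "0 < ?n" and "even (?n - 1)" using assms by (auto intro: odd_pos)
    then show False using parity[of "?n - 1"] flip[of "?n - 1"] by simp
  qed
  then show thesis using that by blast
qed

definition in_and_out :: "('a \<times> 'a) set \<Rightarrow> 'a set set \<Rightarrow> 'a \<Rightarrow> bool" where
  "in_and_out D S v \<longleftrightarrow> (\<exists>w. {w, v} \<in> S \<and> (w, v) \<in> D) \<and> (\<exists>w. {v, w} \<in> S \<and> (v, w) \<in> D)"

lemma alternating_iff_card_in_and_out:
  "alternating D c \<longleftrightarrow> card {v \<in> set c. in_and_out D (cycle_edges c) v} \<le> 1"
  by (simp add: alternating_def in_and_out_def)

definition rank_orientation :: "'a set set \<Rightarrow> ('a \<Rightarrow> 'b::linorder) \<Rightarrow> ('a \<times> 'a) set" where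
  "rank_orientation E g = {(u, v). {u, v} \<in> E \<and> g u < g v}"

definition between :: "('a \<Rightarrow> 'b::linorder) \<Rightarrow> 'a \<Rightarrow> 'a \<Rightarrow> 'a \<Rightarrow> bool" where
  "between g p v q \<longleftrightarrow> g p < g v \<and> g v < g q \<or> g q < g v \<and> g v < g p"

lemma orientation_rank_orientation:
  assumes "simple_graph V E" and "inj_on g V"
  shows "orientation E (rank_orientation E g)"
  unfolding orientation_def
proof (intro conjI allI impI)
  show "\<forall>(u, v) \<in> rank_orientation E g. {u, v} \<in> E"
    by (auto simp: rank_orientation_def)
next
  fix u v assume uv: "u \<noteq> v \<and> {u, v} \<in> E"
  then have "u \<in> V" and "v \<in> V"
    using assms(1) by (auto simp: simple_graph_def doubleton_eq_iff)
  then have "g u \<noteq> g v" using uv assms(2) by (auto dest: inj_onD)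
  then show "(u, v) \<in> rank_orientation E g \<longleftrightarrow> (v, u) \<notin> rank_orientation E g"
    using uv by (auto simp: rank_orientation_def insert_commute)
qed

lemma in_and_out_rank_orientation_iff_between:
  assumes "S \<subseteq> E" and neighbours: "\<And>w. {w, v} \<in> S \<longleftrightarrow> w = p \<or> w = q"
  shows "in_and_out (rank_orientation E g) S v \<longleftrightarrow> between g p v q"
proof -
  have out: "{v, w} \<in> S \<longleftrightarrow> w = p \<or> w = q" for w
    using neighbours[of w] by (simp add: insert_commute)
  then have "{p, v} \<in> E" "{q, v} \<in> E" "{v, p} \<in> E" "{v, q} \<in> E"
    using neighbours assms(1) by blast+
  then show ?thesis
    using neighbours out by (auto simp: in_and_out_def rank_orientation_def between_def)
qed

context
  fixes A :: "'a set" and g :: "'a \<Rightarrow> 'b::linorder"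
  assumes layered: "\<And>x y. x \<in> A \<Longrightarrow> y \<notin> A \<Longrightarrow> g x < g y"
begin

lemma not_between_if_neighbours_other_side:
  assumes "p \<in> A \<longleftrightarrow> v \<notin> A" and "q \<in> A \<longleftrightarrow> v \<notin> A"
  shows "\<not> between g p v q"
  using assms layered[of v p] layered[of v q] layered[of p v] layered[of q v]
  by (auto simp: between_def)

lemma not_between_both_ends:
  assumes "v \<in> A \<longleftrightarrow> w \<in> A" and "p \<in> A \<longleftrightarrow> v \<notin> A" and "q \<in> A \<longleftrightarrow> w \<notin> A"
  shows "\<not> (between g p v w \<and> between g v w q)"
  using assms layered[of v p] layered[of w q] layered[of p v] layered[of q w]
  by (auto simp: between_def)

context
  fixes E :: "'a set set"
  assumes no_monochromatic_path: "\<And>u v w. {u, v} \<in> E \<Longrightarrow> {v, w} \<in> E \<Longrightarrow> u \<noteq> w \<Longrightarrow>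
    (u \<in> A \<longleftrightarrow> v \<in> A) \<Longrightarrow> (v \<in> A \<longleftrightarrow> w \<in> A) \<Longrightarrow> False"
begin

lemma alternating_rank_orientation_5:
  assumes "distinct [a, b, c, d, e]" and "cycle_edges [a, b, c, d, e] \<subseteq> E"
    and same_side: "a \<in> A \<longleftrightarrow> b \<in> A"
  shows "alternating (rank_orientation E g) [a, b, c, d, e]"
proof -
  let ?S = "cycle_edges [a, b, c, d, e]"
  let ?in_out = "in_and_out (rank_orientation E g) ?S"
  let ?T = "{v \<in> set [a, b, c, d, e]. ?in_out v}"
  have S: "?S = {{a, b}, {b, c}, {c, d}, {d, e}, {e, a}}" by (rule cycle_edges_5)
  have edges: "{a, b} \<in> E" "{b, c} \<in> E" "{c, d} \<in> E" "{d, e} \<in> E" "{e, a} \<in> E"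
    using assms(2) by (simp_all add: S)
  have outer: "b \<in> A \<longleftrightarrow> c \<notin> A" "e \<in> A \<longleftrightarrow> a \<notin> A"
    using no_monochromatic_path[OF edges(1,2)] no_monochromatic_path[OF edges(5,1)] assms(1) same_side
    by auto
  then have "c \<in> A \<longleftrightarrow> d \<notin> A" "d \<in> A \<longleftrightarrow> e \<notin> A"
    using no_monochromatic_path[OF edges(3,4)] assms(1) same_side by auto
  note sides = outer this
  have "\<And>w. {w, a} \<in> ?S \<longleftrightarrow> w = e \<or> w = b" "\<And>w. {w, b} \<in> ?S \<longleftrightarrow> w = a \<or> w = c"
    "\<And>w. {w, c} \<in> ?S \<longleftrightarrow> w = b \<or> w = d" "\<And>w. {w, d} \<in> ?S \<longleftrightarrow> w = c \<or> w = e"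
    "\<And>w. {w, e} \<in> ?S \<longleftrightarrow> w = d \<or> w = a"
    using assms(1) by (auto simp: S doubleton_eq_iff)
  note in_out = this[THEN in_and_out_rank_orientation_iff_between[OF assms(2)]]
  have "\<not> ?in_out c" "\<not> ?in_out d" "\<not> ?in_out e"
    unfolding in_out by (rule not_between_if_neighbours_other_side; use sides in blast)+
  moreover have "\<not> (?in_out a \<and> ?in_out b)"
    unfolding in_out by (rule not_between_both_ends; use sides same_side in blast)
  ultimately have "\<forall>x \<in> ?T. \<forall>y \<in> ?T. x = y" by auto
  moreover have "finite ?T" by (rule finite_subset[OF _ finite_set]) blast
  ultimately have "card ?T \<le> Suc 0" by (simp only: card_le_Suc0_iff_eq)
  then show ?thesis unfolding alternating_iff_card_in_and_out by simp
qed

lemma alternating_rank_orientation_five_cycle: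
  assumes "is_cycle V E c" and "length c = 5"
  shows "alternating (rank_orientation E g) c"
proof -
  obtain k where "k < 5" and same_side: "c ! k \<in> A \<longleftrightarrow> c ! (Suc k mod 5) \<in> A"
    using odd_cycle_monochromatic_edge[of c "\<lambda>v. v \<in> A"] assms(2) by auto
  have "length (rotate k c) = 5" using assms(2) by simp
  then obtain a b c' d e where r: "rotate k c = [a, b, c', d, e]"
    by (rule list_of_length_5)
  have "rotate k c ! 0 = c ! k" and "rotate k c ! 1 = c ! (Suc k mod 5)"
    using nth_rotate[of 0 c k] nth_rotate[of 1 c k] \<open>k < 5\<close> assms(2) by simp_all
  then have "a \<in> A \<longleftrightarrow> b \<in> A" using same_side by (simp add: r)
  moreover have "distinct [a, b, c', d, e]" and "cycle_edges [a, b, c', d, e] \<subseteq> E"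
    using assms(1) cycle_edges_rotate[of k c] cycle_edges_subset[OF assms(1)] distinct_rotate[of k c]
    by (simp_all add: r is_cycle_def)
  ultimately have "alternating (rank_orientation E g) [a, b, c', d, e]"
    by (intro alternating_rank_orientation_5)
  then show ?thesis by (simp only: r[symmetric] alternating_rotate)
qed

end

end

lemma matching_adjacent_edges:
  assumes "matching M" and "{u, v} \<in> M" and "{v, w} \<in> M"
  shows "u = w"
proof -
  have "{u, v} \<inter> {v, w} \<noteq> {}" by simp
  then have "{u, v} = {v, w}" using assms unfolding matching_def by metis
  then show ?thesis by (metis doubleton_eq_iff)
qed

lemma bipartiteE:
  assumes "bipartite V E"
  obtains A where "\<And>u v. {u, v} \<in> E \<Longrightarrow> u \<in> A \<longleftrightarrow> v \<notin> A"
proof -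
  obtain A where A: "\<forall>e\<in>E. \<exists>x y. e = {x, y} \<and> x \<in> A \<and> y \<in> V - A"
    using assms unfolding bipartite_def by blast
  have "u \<in> A \<longleftrightarrow> v \<notin> A" if "{u, v} \<in> E" for u v
    using A that by (fastforce simp: doubleton_eq_iff)
  then show thesis using that by blast
qed

theorem mainTheorem10:
  fixes V :: "'a set" and E E1 E2 :: "'a set set"
  assumes "simple_graph V E"
    and "has_odd_girth V E 5"
    and "E = E1 \<union> E2" and "E1 \<inter> E2 = {}"
    and "bipartite V E1"
    and "matching E2"
  shows "\<exists>D. orientation E D \<and>
           (\<forall>c. is_cycle V E c \<and> length c = 5 \<longrightarrow> alternating D c)"
proof -
  obtain A where crossing: "\<And>u v. {u, v} \<in> E1 \<Longrightarrow> u \<in> A \<longleftrightarrow> v \<notin> A"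
    using bipartiteE assms(5) by blast
  have no_monochromatic_path: False
    if "{u, v} \<in> E" "{v, w} \<in> E" "u \<noteq> w" "u \<in> A \<longleftrightarrow> v \<in> A" "v \<in> A \<longleftrightarrow> w \<in> A" for u v w
  proof -
    have "{u, v} \<in> E2" "{v, w} \<in> E2" using that crossing assms(3) by auto
    then show False using matching_adjacent_edges[OF assms(6)] \<open>u \<noteq> w\<close> by blast
  qed
  have "finite V" using assms(1) by (simp add: simple_graph_def)
  then obtain f :: "'a \<Rightarrow> nat" where f: "inj_on f V"
    using finite_imp_inj_to_nat_seg by blast
  define g where "g v = (v \<notin> A, f v)" for v
  have layered: "g x < g y" if "x \<in> A" "y \<notin> A" for x y
    using that by (simp add: g_def)
  have "inj_on g V" using f by (simp add: g_def inj_on_def)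
  then have "orientation E (rank_orientation E g)"
    by (rule orientation_rank_orientation[OF assms(1)])
  moreover have "alternating (rank_orientation E g) c" if "is_cycle V E c" "length c = 5" for c
    by (rule alternating_rank_orientation_five_cycle[OF layered no_monochromatic_path that])
  ultimately show ?thesis by (intro exI[of _ "rank_orientation E g"]) blast
qed

end
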